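(* Let $K\in{\rm Alg}(V)$ be a cubic cyclic Galois field extension of $F$ with ${\rm Gal}(K/F)=\langle\tau\rangle$, and let $(f,g)\in{\rm Gl}(V)\times{\rm Gl}(V)$. Then there exists $(f',g')\in{\rm Gl}(V)\times{\rm Gl}(V)$ with $K^{(f,g)}\cong K^{(f',g')}$ such that $f'$ has exactly one of the following forms: (1) $f'={\rm id}+L(y_1)\tau+L(y_2)\tau^2$ with $y_1,y_2\in K^\times$ and $N(y_1)+N(y_2)-T(\tau(y_1)\tau^2(y_2))\ne-1$; (2) $f'={\rm id}+L(y_2)\tau^2$ with $y_2\in K^\times$, $N(y_2)\ne-1$; (3) $f'={\rm id}+L(y_1)\tau$ with $y_1\in K^\times$, $N(y_1)\ne-1$; (4) $f'={\rm id}$; (5) $f'=L(y_1)\tau+L(y_2)\tau^2$ with $y_1,y_2\in K^\times$, $N(y_2)\ne-N(y_1)$; (6) $f'=L(y_2)\tau^2$ with $y_2\in K^\times$; (7) $f'=L(y_1)\tau$ with $y_1\in K^\times$. Moreover, algebras $K^{(f',g')}$ and $K^{(f'',g'')}$ with $f',f''$ of different forms among (1)–(7) are never isomorphic.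
   Context: $F$ is a field, $V$ a $3$-dimensional $F$-vector space, $K\in{\rm Alg}(V)$ an $F$-algebra structure on $V$ which is a field. $N=N_{K/F}$ and $T=T_{K/F}$ are the field norm and trace. $L(x)$ is the map $y\mapsto xy$. For $f,g\in{\rm End}_F(V)$, $K^{(f,g)}$ is $V$ with product $x\cdot y=f(x)g(y)$. (For reference, the map ${\rm id}\cdot L(y_0)+L(y_1)\tau+L(y_2)\tau^2$ has determinant $N(y_0)+N(y_1)+N(y_2)-T(y_0\tau(y_1)\tau^2(y_2))$.) *)

theory Defs
  imports Complex_Main
begin

text \<open>The base field F is a type 'f, the cubic field K (= V with its field structure) is a
type 'k, and iota : F -> K is the structure map making K an F-algebra.\<close>

definition fscale :: "('f::field \<Rightarrow> 'k::field) \<Rightarrow> 'f \<Rightarrow> 'k \<Rightarrow> 'k" where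
  "fscale \<iota> a x = \<iota> a * x"

definition emb_hom :: "('f::field \<Rightarrow> 'k::field) \<Rightarrow> bool" where
  "emb_hom \<iota> \<longleftrightarrow> \<iota> 1 = 1 \<and> (\<forall>a b. \<iota> (a + b) = \<iota> a + \<iota> b) \<and> (\<forall>a b. \<iota> (a * b) = \<iota> a * \<iota> b)"

definition GL :: "('f::field \<Rightarrow> 'k::field) \<Rightarrow> ('k \<Rightarrow> 'k) \<Rightarrow> bool" where
  "GL \<iota> h \<longleftrightarrow> Vector_Spaces.linear (fscale \<iota>) (fscale \<iota>) h \<and> bij h"

definition F_auts :: "('f::field \<Rightarrow> 'k::field) \<Rightarrow> ('k \<Rightarrow> 'k) set" where
  "F_auts \<iota> = {\<sigma>. bij \<sigma> \<and> (\<forall>x y. \<sigma> (x + y) = \<sigma> x + \<sigma> y) \<and> (\<forall>x y. \<sigma> (x * y) = \<sigma> x * \<sigma> y)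
      \<and> \<sigma> 1 = 1 \<and> (\<forall>a. \<sigma> (\<iota> a) = \<iota> a)}"

text \<open>K^(f,g) is V with product x.y = f(x) g(y). An isomorphism K^(f,g) -> K^(f',g')
is an F-linear bijection phi with phi(f x * g y) = f'(phi x) * g'(phi y).\<close>
definition twisted_iso :: "('f::field \<Rightarrow> 'k::field) \<Rightarrow> ('k \<Rightarrow> 'k) \<Rightarrow> ('k \<Rightarrow> 'k)
    \<Rightarrow> ('k \<Rightarrow> 'k) \<Rightarrow> ('k \<Rightarrow> 'k) \<Rightarrow> bool" where
  "twisted_iso \<iota> f g f' g' \<longleftrightarrow>
     (\<exists>\<phi>. GL \<iota> \<phi> \<and> (\<forall>x y. \<phi> (f x * g y) = f' (\<phi> x) * g' (\<phi> y)))"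

definition cnorm :: "('k::field \<Rightarrow> 'k) \<Rightarrow> 'k \<Rightarrow> 'k" where
  "cnorm \<tau> y = y * \<tau> y * \<tau> (\<tau> y)"

definition ctrace :: "('k::field \<Rightarrow> 'k) \<Rightarrow> 'k \<Rightarrow> 'k" where
  "ctrace \<tau> y = y + \<tau> y + \<tau> (\<tau> y)"

definition twist_form :: "('k::field \<Rightarrow> 'k) \<Rightarrow> nat \<Rightarrow> ('k \<Rightarrow> 'k) \<Rightarrow> bool" where
  "twist_form \<tau> k h \<longleftrightarrow>
    (if k = 1 then (\<exists>y1 y2. y1 \<noteq> 0 \<and> y2 \<noteq> 0 \<and>
          cnorm \<tau> y1 + cnorm \<tau> y2 - ctrace \<tau> (\<tau> y1 * \<tau> (\<tau> y2)) \<noteq> -1 \<and>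
          h = (\<lambda>x. x + y1 * \<tau> x + y2 * \<tau> (\<tau> x)))
     else if k = 2 then (\<exists>y2. y2 \<noteq> 0 \<and> cnorm \<tau> y2 \<noteq> -1 \<and> h = (\<lambda>x. x + y2 * \<tau> (\<tau> x)))
     else if k = 3 then (\<exists>y1. y1 \<noteq> 0 \<and> cnorm \<tau> y1 \<noteq> -1 \<and> h = (\<lambda>x. x + y1 * \<tau> x))
     else if k = 4 then h = id
     else if k = 5 then (\<exists>y1 y2. y1 \<noteq> 0 \<and> y2 \<noteq> 0 \<and> cnorm \<tau> y2 \<noteq> - cnorm \<tau> y1 \<and>
          h = (\<lambda>x. y1 * \<tau> x + y2 * \<tau> (\<tau> x)))
     else if k = 6 then (\<exists>y2. y2 \<noteq> 0 \<and> h = (\<lambda>x. y2 * \<tau> (\<tau> x)))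
     else if k = 7 then (\<exists>y1. y1 \<noteq> 0 \<and> h = (\<lambda>x. y1 * \<tau> x))
     else False)"

end

theory Submission
  imports Defs "HOL-Analysis.Determinants"
begin

text \<open>
Every F-linear endomorphism of K is uniquely of the form
\<open>x \<mapsto> z\<^sub>0 x + z\<^sub>1 \<tau>(x) + z\<^sub>2 \<tau>\<^sup>2(x)\<close> (Dedekind's independence of characters plus a dimension
count).  Composition of such maps corresponds to multiplication of the \<open>3\<times>3\<close> matrices
\<open>M(z)\<close> describing their action on \<open>(x, \<tau> x, \<tau>\<^sup>2 x)\<close>, and \<open>det M(z)\<close> is the norm-trace expression
of the statement.  Hence a bijective map has \<open>det M(z) \<noteq> 0\<close>; scaling \<open>f\<close> by \<open>z\<^sub>0\<^sup>-\<^sup>1\<close> and \<open>g\<close> by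
\<open>z\<^sub>0\<close> brings \<open>f\<close> into one of the forms (1)--(7).
Conversely, an isomorphism \<open>\<phi>\<close> of twisted algebras is a scalar multiple of a Galois
automorphism \<open>\<psi>\<close>, and \<open>f'' \<circ> \<phi>\<close> is a multiple of \<open>\<phi> \<circ> f'\<close>; since \<open>\<psi>\<close> commutes with \<open>\<tau>\<close>,
comparing coefficients shows that \<open>f'\<close> and \<open>f''\<close> have the same vanishing coefficients, and
the seven forms are distinguished by exactly this pattern.
\<close>

lemma dedekind_independence_2:
  fixes s r :: "'k::field \<Rightarrow> 'k"
  assumes "\<And>x y. s (x * y) = s x * s y" "\<And>x y. r (x * y) = r x * r y" "s 1 = 1" "r 1 = 1"
    and "s x0 \<noteq> r x0" and "\<forall>x. a * s x + b * r x = 0"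
  shows "a = 0 \<and> b = 0"
proof -
  have "a + b = 0" using assms(3,4,6) by (metis mult_1_right)
  then have b: "b = - a" by (simp add: eq_neg_iff_add_eq_0 add.commute)
  have "a * (s x0 - r x0) = 0" using assms(6)[rule_format, of x0] b by (simp add: algebra_simps)
  with assms(5) b show ?thesis by simp
qed

lemma dedekind_independence_3:
  fixes s r :: "'k::field \<Rightarrow> 'k"
  assumes ms: "\<And>x y. s (x * y) = s x * s y" and mr: "\<And>x y. r (x * y) = r x * r y"
    and s1: "s 1 = 1" and r1: "r 1 = 1"
    and "s z0 \<noteq> z0" and "r z1 \<noteq> z1" and "s z2 \<noteq> r z2"
    and h: "\<forall>x. c0 * x + c1 * s x + c2 * r x = 0"
  shows "c0 = 0 \<and> c1 = 0 \<and> c2 = 0"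
proof -
  \<comment> \<open>Artin's trick: compare the relation at \<open>x z\<^sub>0\<close> with \<open>z\<^sub>0\<close> times the relation at \<open>x\<close>.\<close>
  have "\<forall>x. (c1 * (s z0 - z0)) * s x + (c2 * (r z0 - z0)) * r x = 0"
  proof
    fix x
    have "(c1 * (s z0 - z0)) * s x + (c2 * (r z0 - z0)) * r x =
      (c0 * (x * z0) + c1 * s (x * z0) + c2 * r (x * z0)) - z0 * (c0 * x + c1 * s x + c2 * r x)"
      unfolding ms mr by (simp add: algebra_simps)
    then show "(c1 * (s z0 - z0)) * s x + (c2 * (r z0 - z0)) * r x = 0" using h by simp
  qed
  from dedekind_independence_2[OF ms mr s1 r1 \<open>s z2 \<noteq> r z2\<close> this] \<open>s z0 \<noteq> z0\<close>
  have "c1 = 0" by simp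
  with h have "\<forall>x. c0 * id x + c2 * r x = 0" by simp
  from dedekind_independence_2[of id r z1, OF _ mr _ r1 _ this] \<open>r z1 \<noteq> z1\<close>
  have "c0 = 0 \<and> c2 = 0" by simp
  with \<open>c1 = 0\<close> show ?thesis by simp
qed

locale field_embedding =
  fixes \<iota> :: "'f::field \<Rightarrow> 'k::field"
  assumes hom: "emb_hom \<iota>"
begin

lemma emb_one [simp]: "\<iota> 1 = 1"
  and emb_add [simp]: "\<iota> (a + b) = \<iota> a + \<iota> b"
  and emb_mult [simp]: "\<iota> (a * b) = \<iota> a * \<iota> b"
  using hom unfolding emb_hom_def by auto

lemma emb_zero [simp]: "\<iota> 0 = 0"
  by (metis add.right_neutral add_left_cancel emb_add)

lemma vector_space_fscale: "vector_space (fscale \<iota>)"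
  unfolding vector_space_def fscale_def by (simp add: algebra_simps)

lemma linear_fscale_iff:
  "Vector_Spaces.linear (fscale \<iota>) (fscale \<iota>) h \<longleftrightarrow>
     (\<forall>x y. h (x + y) = h x + h y) \<and> (\<forall>c x. h (\<iota> c * x) = \<iota> c * h x)"
  unfolding Vector_Spaces.linear_iff using vector_space_fscale by (simp add: fscale_def)

lemma GL_id: "GL \<iota> id"
  unfolding GL_def linear_fscale_iff by simp

lemma GL_mult_const:
  assumes "GL \<iota> h" "c \<noteq> 0"
  shows "GL \<iota> (\<lambda>x. c * h x)"
proof -
  have "bij ((*) c)"
    by (rule bij_betwI[where g = "(*) (inverse c)"]) (use assms(2) in auto)
  then have "bij (\<lambda>x. c * h x)"
    using assms(1) bij_comp[of h "(*) c"] by (simp add: GL_def comp_def)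
  with assms(1) show ?thesis
    unfolding GL_def linear_fscale_iff by (simp add: distrib_left mult.left_commute)
qed

lemma GL_inv:
  assumes "GL \<iota> h"
  shows "GL \<iota> (inv h)"
proof -
  have b: "bij h" and lin: "\<And>x y. h (x + y) = h x + h y" "\<And>c x. h (\<iota> c * x) = \<iota> c * h x"
    using assms unfolding GL_def linear_fscale_iff by auto
  have hi: "h (inv h x) = x" and ih: "inv h (h x) = x" for x
    using b by (simp_all add: bij_is_surj surj_f_inv_f bij_is_inj)
  have "inv h (x + y) = inv h x + inv h y" for x y
    using ih[of "inv h x + inv h y"] by (simp add: lin hi)
  moreover have "inv h (\<iota> c * x) = \<iota> c * inv h x" for c x
    using ih[of "\<iota> c * inv h x"] by (simp add: lin hi)
  ultimately show ?thesis
    using b unfolding GL_def linear_fscale_iff by (simp add: bij_imp_bij_inv)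
qed

lemma F_auts_comp: "s \<in> F_auts \<iota> \<Longrightarrow> r \<in> F_auts \<iota> \<Longrightarrow> s \<circ> r \<in> F_auts \<iota>"
  unfolding F_auts_def by (auto simp: bij_comp)

lemma GL_eq_0_iff:
  assumes "GL \<iota> h"
  shows "h x = 0 \<longleftrightarrow> x = 0"
proof -
  have "h 0 = 0"
    using assms emb_zero unfolding GL_def linear_fscale_iff by (metis mult_zero_left)
  with assms show ?thesis
    unfolding GL_def by (metis bij_is_inj injD)
qed

lemma twisted_iso_rescale:
  assumes "c \<noteq> 0"
  shows "twisted_iso \<iota> f g (\<lambda>x. inverse c * f x) (\<lambda>x. c * g x)"
  unfolding twisted_iso_def using assms by (intro exI[of _ id]) (simp add: GL_id)

lemma normalized_F_aut:
  assumes GL: "GL \<iota> \<phi>" and mult: "\<And>u v. \<phi> (u * v) * d = \<phi> u * \<phi> v"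
  shows "(\<lambda>u. \<phi> u / \<phi> 1) \<in> F_auts \<iota>"
proof -
  have b: "bij \<phi>" and add: "\<And>x y. \<phi> (x + y) = \<phi> x + \<phi> y"
    and hom: "\<And>a x. \<phi> (\<iota> a * x) = \<iota> a * \<phi> x"
    using GL unfolding GL_def linear_fscale_iff by auto
  have c: "\<phi> 1 \<noteq> 0"
    using GL_eq_0_iff[OF GL] by simp
  with mult[of 1 1] have d: "d = \<phi> 1"
    by simp
  have "bij (\<lambda>y. y / \<phi> 1)"
    by (rule bij_betwI[where g = "\<lambda>y. y * \<phi> 1"]) (use c in auto)
  then have "bij (\<lambda>u. \<phi> u / \<phi> 1)"
    using bij_comp[OF b] by (simp add: comp_def)
  moreover have "\<phi> (x * y) / \<phi> 1 = \<phi> x / \<phi> 1 * (\<phi> y / \<phi> 1)" for x y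
    using mult[of x y] c d by (simp add: field_simps)
  moreover have "\<phi> (\<iota> a) / \<phi> 1 = \<iota> a" for a
    using hom[of a 1] c by simp
  ultimately show ?thesis
    unfolding F_auts_def using c by (simp add: add add_divide_distrib)
qed

lemma twisted_iso_imp_F_aut:
  assumes iso: "twisted_iso \<iota> f1 g1 f2 g2" and "bij f1" "bij g1"
  obtains \<psi> c b where "\<psi> \<in> F_auts \<iota>" "c \<noteq> 0" "b \<noteq> 0" "\<And>x. f2 (c * \<psi> x) = b * \<psi> (f1 x)"
proof -
  obtain \<phi> where GL: "GL \<iota> \<phi>" and eq: "\<And>x y. \<phi> (f1 x * g1 y) = f2 (\<phi> x) * g2 (\<phi> y)"
    using iso unfolding twisted_iso_def by blast
  have f1: "f1 (inv f1 u) = u" and g1: "g1 (inv g1 u) = u" for u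
    using assms(2,3) by (simp_all add: bij_is_surj surj_f_inv_f)
  define \<alpha> where "\<alpha> = f2 (\<phi> (inv f1 1))"
  define \<beta> where "\<beta> = g2 (\<phi> (inv g1 1))"
  have E1: "\<phi> (f1 x) = f2 (\<phi> x) * \<beta>" for x
    using eq[of x "inv g1 1"] by (simp add: g1 \<beta>_def)
  have E2: "\<phi> (g1 y) = \<alpha> * g2 (\<phi> y)" for y
    using eq[of "inv f1 1" y] by (simp add: f1 \<alpha>_def)
  have "\<phi> (u * v) * (\<alpha> * \<beta>) = \<phi> u * \<phi> v" for u v
    using eq[of "inv f1 u" "inv g1 v"] E1[of "inv f1 u"] E2[of "inv g1 v"]
    by (simp add: f1 g1 algebra_simps)
  then have aut: "(\<lambda>u. \<phi> u / \<phi> 1) \<in> F_auts \<iota>"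
    by (rule normalized_F_aut[OF GL])
  have c: "\<phi> 1 \<noteq> 0"
    using GL_eq_0_iff[OF GL] by simp
  then have b: "\<beta> \<noteq> 0"
    using E1[of "inv f1 1"] by (auto simp: f1)
  have "f2 (\<phi> 1 * (\<phi> x / \<phi> 1)) = \<phi> 1 / \<beta> * (\<phi> (f1 x) / \<phi> 1)" for x
    using E1[of x] b c by simp
  with aut c b show thesis
    by (intro that[of "\<lambda>u. \<phi> u / \<phi> 1" "\<phi> 1" "\<phi> 1 / \<beta>"]) auto
qed

end

locale cyclic_cubic = field_embedding \<iota> for \<iota> :: "'f::field \<Rightarrow> 'k::field" +
  fixes \<tau> :: "'k \<Rightarrow> 'k"
  assumes dim3: "vector_space.dim (fscale \<iota>) (UNIV :: 'k set) = 3"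
    and gal: "F_auts \<iota> = {id, \<tau>, \<tau> \<circ> \<tau>}"
    and ord3: "card {id, \<tau>, \<tau> \<circ> \<tau>} = 3"
begin

lemma tau_aut: "\<tau> \<in> F_auts \<iota>"
  using gal by auto

lemma tau_bij: "bij \<tau>"
  and tau_add [simp]: "\<tau> (x + y) = \<tau> x + \<tau> y"
  and tau_mult [simp]: "\<tau> (x * y) = \<tau> x * \<tau> y"
  and tau_one [simp]: "\<tau> 1 = 1"
  and tau_emb [simp]: "\<tau> (\<iota> a) = \<iota> a"
  using tau_aut unfolding F_auts_def by auto

lemma tau_eq_iff [simp]: "\<tau> x = \<tau> y \<longleftrightarrow> x = y"
  using tau_bij by (auto simp: bij_def inj_eq)

lemma tau_zero [simp]: "\<tau> 0 = 0"
  by (metis add.right_neutral add_left_cancel tau_add)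

lemma tau_eq_0_iff [simp]: "\<tau> x = 0 \<longleftrightarrow> x = 0"
  using tau_eq_iff[of x 0] by simp

lemma tau_distinct: "\<tau> \<noteq> id" "\<tau> \<circ> \<tau> \<noteq> id" "\<tau> \<noteq> \<tau> \<circ> \<tau>"
proof -
  have "distinct [id, \<tau>, \<tau> \<circ> \<tau>]"
    using ord3 by (intro card_distinct) simp
  then show "\<tau> \<noteq> id" "\<tau> \<circ> \<tau> \<noteq> id" "\<tau> \<noteq> \<tau> \<circ> \<tau>"
    by auto
qed

lemma tau_cube [simp]: "\<tau> (\<tau> (\<tau> x)) = x"
proof -
  have "\<tau> \<circ> \<tau> \<circ> \<tau> \<in> F_auts \<iota>"
    using F_auts_comp tau_aut by blast
  moreover have "\<tau> \<circ> \<tau> \<circ> \<tau> \<noteq> \<tau>" and "\<tau> \<circ> \<tau> \<circ> \<tau> \<noteq> \<tau> \<circ> \<tau>"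
    using tau_distinct by (auto simp: fun_eq_iff)
  ultimately have "\<tau> \<circ> \<tau> \<circ> \<tau> = id"
    using gal by auto
  then show ?thesis
    by (metis comp_apply id_apply)
qed

definition skew_map :: "'k \<Rightarrow> 'k \<Rightarrow> 'k \<Rightarrow> 'k \<Rightarrow> 'k" where
  "skew_map z0 z1 z2 x = z0 * x + z1 * \<tau> x + z2 * \<tau> (\<tau> x)"

lemma skew_map_eq_0_iff: "(\<forall>x. skew_map z0 z1 z2 x = 0) \<longleftrightarrow> z0 = 0 \<and> z1 = 0 \<and> z2 = 0"
proof
  assume "\<forall>x. skew_map z0 z1 z2 x = 0"
  moreover obtain a b c where "\<tau> a \<noteq> a" "\<tau> (\<tau> b) \<noteq> b" "\<tau> c \<noteq> \<tau> (\<tau> c)"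
    using tau_distinct by (auto simp: fun_eq_iff)
  ultimately show "z0 = 0 \<and> z1 = 0 \<and> z2 = 0"
    using dedekind_independence_3[of \<tau> "\<lambda>x. \<tau> (\<tau> x)" a b c z0 z1 z2]
    by (simp add: skew_map_def)
qed (simp add: skew_map_def)

lemma skew_map_inject:
  "skew_map z0 z1 z2 = skew_map w0 w1 w2 \<longleftrightarrow> z0 = w0 \<and> z1 = w1 \<and> z2 = w2"
proof
  assume "skew_map z0 z1 z2 = skew_map w0 w1 w2"
  then have "\<forall>x. skew_map (z0 - w0) (z1 - w1) (z2 - w2) x = 0"
    by (simp add: skew_map_def fun_eq_iff algebra_simps)
  then show "z0 = w0 \<and> z1 = w1 \<and> z2 = w2"
    unfolding skew_map_eq_0_iff by simp
qed simp

lemma skew_map_add: "skew_map z0 z1 z2 (x + y) = skew_map z0 z1 z2 x + skew_map z0 z1 z2 y"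
  and skew_map_emb_mult: "skew_map z0 z1 z2 (\<iota> a * x) = \<iota> a * skew_map z0 z1 z2 x"
  by (simp_all add: skew_map_def algebra_simps)

lemma skew_map_mult_arg:
  "skew_map w0 w1 w2 (c * x) = skew_map (w0 * c) (w1 * \<tau> c) (w2 * \<tau> (\<tau> c)) x"
  by (simp add: skew_map_def algebra_simps)

lemma skew_map_comp:
  "skew_map z0 z1 z2 \<circ> skew_map w0 w1 w2 =
     skew_map (z0 * w0 + z1 * \<tau> w2 + z2 * \<tau> (\<tau> w1))
              (z0 * w1 + z1 * \<tau> w0 + z2 * \<tau> (\<tau> w2))
              (z0 * w2 + z1 * \<tau> w1 + z2 * \<tau> (\<tau> w0))"
  by (simp add: skew_map_def fun_eq_iff algebra_simps)

text \<open>Row \<open>k\<close> of the Galois matrix holds the coefficients of \<open>\<tau>\<^sup>k \<circ> skew_map z\<^sub>0 z\<^sub>1 z\<^sub>2\<close>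
  with respect to \<open>id, \<tau>, \<tau>\<^sup>2\<close>; thus composition of skew maps is matrix multiplication.\<close>

definition galois_matrix :: "'k \<Rightarrow> 'k \<Rightarrow> 'k \<Rightarrow> 'k^3^3" where
  "galois_matrix z0 z1 z2 =
     vector [vector [z0, z1, z2], vector [\<tau> z2, \<tau> z0, \<tau> z1], vector [\<tau> (\<tau> z1), \<tau> (\<tau> z2), \<tau> (\<tau> z0)]]"

lemma galois_matrix_mult:
  "galois_matrix z0 z1 z2 ** galois_matrix w0 w1 w2 =
     galois_matrix (z0 * w0 + z1 * \<tau> w2 + z2 * \<tau> (\<tau> w1))
                   (z0 * w1 + z1 * \<tau> w0 + z2 * \<tau> (\<tau> w2))
                   (z0 * w2 + z1 * \<tau> w1 + z2 * \<tau> (\<tau> w0))"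
  by (simp add: galois_matrix_def vec_eq_iff forall_3 matrix_matrix_mult_def sum_3 algebra_simps)

lemma galois_matrix_one: "galois_matrix 1 0 0 = mat 1"
  by (simp add: galois_matrix_def vec_eq_iff forall_3 mat_def)

lemma det_galois_matrix:
  "det (galois_matrix z0 z1 z2) =
     cnorm \<tau> z0 + cnorm \<tau> z1 + cnorm \<tau> z2 - ctrace \<tau> (z0 * \<tau> z1 * \<tau> (\<tau> z2))"
  by (simp add: galois_matrix_def det_3 cnorm_def ctrace_def algebra_simps)

lemma linear_skew_map: "Vector_Spaces.linear (fscale \<iota>) (fscale \<iota>) (skew_map z0 z1 z2)"
  unfolding linear_fscale_iff by (simp add: skew_map_add skew_map_emb_mult)

lemma spanning_triple:
  obtains e1 e2 e3 where "\<And>x. \<exists>a1 a2 a3. x = \<iota> a1 * e1 + \<iota> a2 * e2 + \<iota> a3 * e3"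
proof -
  interpret V: vector_space "fscale \<iota>"
    by (rule vector_space_fscale)
  obtain B where B: "UNIV \<subseteq> V.span B" "card B = 3"
    using V.basis_exists[of UNIV] dim3 by metis
  then obtain e1 e2 e3 where e: "B = {e1, e2, e3}" "e1 \<noteq> e2" "e1 \<noteq> e3" "e2 \<noteq> e3"
    by (auto simp: card_3_iff)
  have "\<exists>a1 a2 a3. x = \<iota> a1 * e1 + \<iota> a2 * e2 + \<iota> a3 * e3" for x
  proof -
    obtain u where "x = (\<Sum>v\<in>B. fscale \<iota> (u v) v)"
      using B V.span_finite[of B] e by auto
    then show ?thesis
      using e by (auto simp: fscale_def add.assoc)
  qed
  then show thesis by (rule that)
qed

lemma linear_eq_skew_map:
  assumes h: "Vector_Spaces.linear (fscale \<iota>) (fscale \<iota>) h"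
  obtains z0 z1 z2 where "h = skew_map z0 z1 z2"
proof -
  obtain e1 e2 e3 where e: "\<And>x. \<exists>a1 a2 a3. x = \<iota> a1 * e1 + \<iota> a2 * e2 + \<iota> a3 * e3"
    using spanning_triple by blast
  have ext: "p = q"
    if p: "Vector_Spaces.linear (fscale \<iota>) (fscale \<iota>) p"
      and q: "Vector_Spaces.linear (fscale \<iota>) (fscale \<iota>) q"
      and "p e1 = q e1" "p e2 = q e2" "p e3 = q e3" for p q
  proof
    fix x
    obtain a1 a2 a3 where "x = \<iota> a1 * e1 + \<iota> a2 * e2 + \<iota> a3 * e3"
      using e by blast
    with p q that(3-5) show "p x = q x"
      unfolding linear_fscale_iff by simp
  qed
  \<comment> \<open>The coefficients of \<open>h\<close> solve a linear system whose matrix is invertible by Dedekind.\<close>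
  define B :: "'k^3^3" where
    "B = vector [vector [e1, \<tau> e1, \<tau> (\<tau> e1)], vector [e2, \<tau> e2, \<tau> (\<tau> e2)],
                 vector [e3, \<tau> e3, \<tau> (\<tau> e3)]]"
  have B_mult: "B *v z = vector [skew_map (z$1) (z$2) (z$3) e1, skew_map (z$1) (z$2) (z$3) e2,
                                 skew_map (z$1) (z$2) (z$3) e3]" for z
    by (simp add: B_def vec_eq_iff forall_3 matrix_vector_mult_def sum_3 skew_map_def algebra_simps)
  have "inj ((*v) B)"
  proof (rule injI)
    fix z w :: "'k^3"
    assume "B *v z = B *v w"
    then have "skew_map (z$1) (z$2) (z$3) = skew_map (w$1) (w$2) (w$3)"
      by (intro ext linear_skew_map) (simp_all add: B_mult vec_eq_iff forall_3)
    then show "z = w"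
      by (simp add: skew_map_inject vec_eq_iff forall_3)
  qed
  then have "invertible B"
    by (simp add: invertible_left_inverse matrix_left_invertible_injective)
  then have "surj ((*v) B)"
    by (simp add: invertible_right_inverse flip: matrix_right_invertible_surjective)
  then obtain z where "B *v z = vector [h e1, h e2, h e3]"
    by (metis surjD)
  then have "h = skew_map (z$1) (z$2) (z$3)"
    by (intro ext h linear_skew_map) (simp_all add: B_mult vec_eq_iff forall_3)
  then show thesis by (rule that)
qed

lemma skew_map_id: "skew_map 1 0 0 = id"
  by (simp add: skew_map_def fun_eq_iff)

lemma det_galois_matrix_nonzero:
  assumes "GL \<iota> (skew_map z0 z1 z2)"
  shows "det (galois_matrix z0 z1 z2) \<noteq> 0"
proof -
  obtain w0 w1 w2 where w: "inv (skew_map z0 z1 z2) = skew_map w0 w1 w2"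
    using GL_inv[OF assms] linear_eq_skew_map unfolding GL_def by blast
  have "skew_map z0 z1 z2 \<circ> inv (skew_map z0 z1 z2) = id"
    using assms by (metis GL_def bij_is_surj surj_iff)
  then have "skew_map z0 z1 z2 \<circ> skew_map w0 w1 w2 = skew_map 1 0 0"
    by (simp add: w skew_map_id)
  then have "galois_matrix z0 z1 z2 ** galois_matrix w0 w1 w2 = mat 1"
    by (simp only: skew_map_comp skew_map_inject galois_matrix_mult flip: galois_matrix_one)
  then have "det (galois_matrix z0 z1 z2) * det (galois_matrix w0 w1 w2) = 1"
    by (simp flip: det_mul)
  then show ?thesis
    by auto
qed

end

definition form_pattern :: "nat \<Rightarrow> bool \<times> bool \<times> bool" where
  "form_pattern k =
    (if k = 1 then (True, True, True) else if k = 2 then (True, False, True)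
     else if k = 3 then (True, True, False) else if k = 4 then (True, False, False)
     else if k = 5 then (False, True, True) else if k = 6 then (False, False, True)
     else (False, True, False))"

lemma atLeastAtMost_1_7: "k \<in> {1..7} \<longleftrightarrow> k = 1 \<or> k = 2 \<or> k = 3 \<or> k = 4 \<or> k = 5 \<or> k = 6 \<or> k = (7::nat)"
  by auto

lemma form_pattern_inject: "i \<in> {1..7} \<Longrightarrow> j \<in> {1..7} \<Longrightarrow> form_pattern i = form_pattern j \<longleftrightarrow> i = j"
  unfolding atLeastAtMost_1_7 by (elim disjE) (simp_all add: form_pattern_def)

lemma form_pattern_surj: "p \<noteq> (False, False, False) \<Longrightarrow> \<exists>k\<in>{1..7}. form_pattern k = p"
  unfolding Bex_def atLeastAtMost_1_7
  by (cases p) (auto simp: form_pattern_def conj_disj_distribR ex_disj_distrib)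

context cyclic_cubic
begin

lemma cnorm_eq_0_iff [simp]: "cnorm \<tau> y = 0 \<longleftrightarrow> y = 0"
  by (simp add: cnorm_def)

lemma cnorm_zero [simp]: "cnorm \<tau> 0 = 0"
  and ctrace_zero [simp]: "ctrace \<tau> 0 = 0"
  by (simp_all add: cnorm_def ctrace_def)

lemma det_galois_matrix_normalized:
  "det (galois_matrix 1 z1 z2) = 1 + (cnorm \<tau> z1 + cnorm \<tau> z2 - ctrace \<tau> (\<tau> z1 * \<tau> (\<tau> z2)))"
  "det (galois_matrix 0 z1 z2) = cnorm \<tau> z1 + cnorm \<tau> z2"
  by (simp_all add: det_galois_matrix cnorm_def)

lemma skew_map_forms:
  "(\<lambda>x. x + y1 * \<tau> x + y2 * \<tau> (\<tau> x)) = skew_map 1 y1 y2"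
  "(\<lambda>x. x + y2 * \<tau> (\<tau> x)) = skew_map 1 0 y2"
  "(\<lambda>x. x + y1 * \<tau> x) = skew_map 1 y1 0"
  "id = skew_map 1 0 0"
  "(\<lambda>x. y1 * \<tau> x + y2 * \<tau> (\<tau> x)) = skew_map 0 y1 y2"
  "(\<lambda>x. y2 * \<tau> (\<tau> x)) = skew_map 0 0 y2"
  "(\<lambda>x. y1 * \<tau> x) = skew_map 0 y1 0"
  by (simp_all add: skew_map_def fun_eq_iff)

text \<open>The norm-trace conditions in the forms (1)--(7) say precisely that the Galois matrix is
  invertible.\<close>

lemma twist_form_iff:
  assumes "k \<in> {1..7}"
  shows "twist_form \<tau> k h \<longleftrightarrow>
    (\<exists>z0 z1 z2. h = skew_map z0 z1 z2 \<and> z0 \<in> {0, 1} \<and> det (galois_matrix z0 z1 z2) \<noteq> 0 \<and>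
       form_pattern k = (z0 \<noteq> 0, z1 \<noteq> 0, z2 \<noteq> 0))"
  using assms unfolding atLeastAtMost_1_7 twist_form_def skew_map_forms
  by (elim disjE)
    (auto simp: form_pattern_def skew_map_inject det_galois_matrix_normalized add_eq_0_iff)

lemma twist_form_unique:
  assumes "i \<in> {1..7}" "j \<in> {1..7}" "twist_form \<tau> i h" "twist_form \<tau> j h"
  shows "i = j"
proof -
  obtain z0 z1 z2 where "h = skew_map z0 z1 z2" "form_pattern i = (z0 \<noteq> 0, z1 \<noteq> 0, z2 \<noteq> 0)"
    using assms(3) twist_form_iff[OF assms(1)] by blast
  moreover obtain w0 w1 w2 where "h = skew_map w0 w1 w2" "form_pattern j = (w0 \<noteq> 0, w1 \<noteq> 0, w2 \<noteq> 0)"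
    using assms(4) twist_form_iff[OF assms(2)] by blast
  ultimately have "form_pattern i = form_pattern j"
    by (simp add: skew_map_inject)
  with assms(1,2) show ?thesis
    by (simp add: form_pattern_inject)
qed

lemma twist_form_exists:
  assumes "z0 \<in> {0, 1}" and "det (galois_matrix z0 z1 z2) \<noteq> 0"
  shows "\<exists>k\<in>{1..7}. twist_form \<tau> k (skew_map z0 z1 z2)"
proof -
  have "(z0 \<noteq> 0, z1 \<noteq> 0, z2 \<noteq> 0) \<noteq> (False, False, False)"
    using assms(2) by (auto simp: det_galois_matrix_normalized)
  then obtain k where "k \<in> {1..7}" "form_pattern k = (z0 \<noteq> 0, z1 \<noteq> 0, z2 \<noteq> 0)"
    using form_pattern_surj by blast
  with assms have "twist_form \<tau> k (skew_map z0 z1 z2)"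
    by (auto simp: twist_form_iff)
  with \<open>k \<in> {1..7}\<close> show ?thesis ..
qed

lemma normal_form_exists:
  assumes "GL \<iota> f" "GL \<iota> g"
  obtains f' g' k where "GL \<iota> f'" "GL \<iota> g'" "twisted_iso \<iota> f g f' g'" "k \<in> {1..7}" "twist_form \<tau> k f'"
proof -
  obtain z0 z1 z2 where f: "f = skew_map z0 z1 z2"
    using assms(1) linear_eq_skew_map unfolding GL_def by blast
  define c where "c = (if z0 = 0 then 1 else z0)"
  have c: "c \<noteq> 0"
    by (simp add: c_def)
  have f': "(\<lambda>x. inverse c * f x) = skew_map (z0 / c) (z1 / c) (z2 / c)"
    by (simp add: f skew_map_def fun_eq_iff divide_inverse algebra_simps)
  have GL': "GL \<iota> (\<lambda>x. inverse c * f x)" "GL \<iota> (\<lambda>x. c * g x)"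
    using c assms by (simp_all add: GL_mult_const)
  moreover have "z0 / c \<in> {0, 1}"
    by (simp add: c_def)
  ultimately obtain k where "k \<in> {1..7}" "twist_form \<tau> k (\<lambda>x. inverse c * f x)"
    using twist_form_exists det_galois_matrix_nonzero by (metis f')
  with GL' twisted_iso_rescale[OF c] show thesis
    by (rule that)
qed

lemma F_aut_skew_map:
  assumes "\<psi> \<in> F_auts \<iota>"
  shows "\<psi> (skew_map z0 z1 z2 x) = skew_map (\<psi> z0) (\<psi> z1) (\<psi> z2) (\<psi> x)"
proof -
  have "\<psi> = id \<or> \<psi> = \<tau> \<or> \<psi> = \<tau> \<circ> \<tau>"
    using assms gal by auto
  then have "\<psi> (\<tau> y) = \<tau> (\<psi> y)" for y
    by auto
  with assms show ?thesis
    by (simp add: F_auts_def skew_map_def)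
qed

lemma twisted_iso_same_pattern:
  assumes "GL \<iota> (skew_map z0 z1 z2)" "GL \<iota> g1"
    and "twisted_iso \<iota> (skew_map z0 z1 z2) g1 (skew_map w0 w1 w2) g2"
  shows "(z0 \<noteq> 0, z1 \<noteq> 0, z2 \<noteq> 0) = (w0 \<noteq> 0, w1 \<noteq> 0, w2 \<noteq> 0)"
proof -
  obtain \<psi> c b where \<psi>: "\<psi> \<in> F_auts \<iota>" and "c \<noteq> 0" "b \<noteq> 0"
    and intertwine: "\<And>x. skew_map w0 w1 w2 (c * \<psi> x) = b * \<psi> (skew_map z0 z1 z2 x)"
    using twisted_iso_imp_F_aut assms unfolding GL_def by metis
  have \<psi>_bij: "bij \<psi>" and \<psi>_0: "\<psi> y = 0 \<longleftrightarrow> y = 0" for y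
    using \<psi> GL_eq_0_iff[of \<psi>] unfolding F_auts_def GL_def linear_fscale_iff by auto
  have "skew_map (w0 * c) (w1 * \<tau> c) (w2 * \<tau> (\<tau> c)) = skew_map (b * \<psi> z0) (b * \<psi> z1) (b * \<psi> z2)"
  proof
    fix u
    obtain x where "u = \<psi> x"
      using \<psi>_bij by (metis bij_pointE)
    with intertwine[of x] show "skew_map (w0 * c) (w1 * \<tau> c) (w2 * \<tau> (\<tau> c)) u =
        skew_map (b * \<psi> z0) (b * \<psi> z1) (b * \<psi> z2) u"
      by (simp add: skew_map_mult_arg F_aut_skew_map[OF \<psi>]) (simp add: skew_map_def algebra_simps)
  qed
  then have "(w0 * c = 0 \<longleftrightarrow> b * \<psi> z0 = 0) \<and> (w1 * \<tau> c = 0 \<longleftrightarrow> b * \<psi> z1 = 0) \<and>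
      (w2 * \<tau> (\<tau> c) = 0 \<longleftrightarrow> b * \<psi> z2 = 0)"
    by (simp add: skew_map_inject)
  with \<open>c \<noteq> 0\<close> \<open>b \<noteq> 0\<close> show ?thesis
    by (simp add: \<psi>_0)
qed

lemma twisted_iso_same_form:
  assumes "i \<in> {1..7}" "j \<in> {1..7}" "twist_form \<tau> i f'" "twist_form \<tau> j f''"
    and "GL \<iota> f'" "GL \<iota> g'" "twisted_iso \<iota> f' g' f'' g''"
  shows "i = j"
proof -
  obtain z0 z1 z2 where z: "f' = skew_map z0 z1 z2" "form_pattern i = (z0 \<noteq> 0, z1 \<noteq> 0, z2 \<noteq> 0)"
    using assms(3) twist_form_iff[OF assms(1)] by blast
  obtain w0 w1 w2 where w: "f'' = skew_map w0 w1 w2" "form_pattern j = (w0 \<noteq> 0, w1 \<noteq> 0, w2 \<noteq> 0)"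
    using assms(4) twist_form_iff[OF assms(2)] by blast
  have "form_pattern i = form_pattern j"
    using twisted_iso_same_pattern assms(5-7) z w by simp
  with assms(1,2) show ?thesis
    by (simp add: form_pattern_inject)
qed

end

theorem mainTheorem14:
  fixes \<iota> :: "'f::field \<Rightarrow> 'k::field" and \<tau> f g :: "'k \<Rightarrow> 'k"
  assumes hom: "emb_hom \<iota>"
    and dim3: "vector_space.dim (fscale \<iota>) (UNIV :: 'k set) = 3"
    and gal: "F_auts \<iota> = {id, \<tau>, \<tau> \<circ> \<tau>}"
    and ord3: "card {id, \<tau>, \<tau> \<circ> \<tau>} = 3"
    and f: "GL \<iota> f" and g: "GL \<iota> g"
  shows "(\<exists>f' g'. GL \<iota> f' \<and> GL \<iota> g' \<and> twisted_iso \<iota> f g f' g' \<and>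
            (\<exists>!k. k \<in> {1..7} \<and> twist_form \<tau> k f'))
       \<and> (\<forall>i j f' g' f'' g''. i \<in> {1..7} \<and> j \<in> {1..7} \<and> i \<noteq> j \<and>
            GL \<iota> f' \<and> GL \<iota> g' \<and> GL \<iota> f'' \<and> GL \<iota> g'' \<and>
            twist_form \<tau> i f' \<and> twist_form \<tau> j f'' \<longrightarrow> \<not> twisted_iso \<iota> f' g' f'' g'')"
proof -
  interpret cyclic_cubic \<iota> \<tau>
    using hom dim3 gal ord3 by unfold_locales
  obtain f' g' k where "GL \<iota> f'" "GL \<iota> g'" "twisted_iso \<iota> f g f' g'" "k \<in> {1..7}" "twist_form \<tau> k f'"
    using normal_form_exists[OF f g] .
  moreover from \<open>k \<in> {1..7}\<close> \<open>twist_form \<tau> k f'\<close> have "\<exists>!k. k \<in> {1..7} \<and> twist_form \<tau> k f'"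
    using twist_form_unique by blast
  ultimately show ?thesis
    using twisted_iso_same_form by blast
qed

end
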